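(* Let $k$ be a field, let $n,m,n_1,\dots,n_r$ be positive integers with $n_1+\dots+n_r=n$, and let $G\subseteq\mathfrak{S}_r$ be a permutation group. There exists an $n\times n$ quantum parameter matrix $\mathfrak{q}$ with blocks $B_1,\dots,B_r$ of sizes $|B_i|=n_i$ and $\mathrm{Stab}(\mathfrak{q})=G$ (identifying $B_i$ with $i$), giving $\mathrm{Aut}_{\mathrm{gr}}(S_{\mathfrak{q}}(k^n))\cong\prod_i\mathrm{GL}(n_i,k)\rtimes G$, if and only if there exists an $mn\times mn$ quantum parameter matrix $\mathfrak{q}'$ with blocks $B'_1,\dots,B'_r$ of sizes $|B'_i|=m\,n_i$ and $\mathrm{Stab}(\mathfrak{q}')=G$ (identifying $B'_i$ with $i$), giving $\mathrm{Aut}_{\mathrm{gr}}(S_{\mathfrak{q}'}(k^{mn}))\cong\prod_i\mathrm{GL}(m\cdot n_i,k)\rtimes G$.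
   Context: A quantum parameter matrix is a square matrix $\mathfrak{p}=(p_{ij})$ over $k$ with $p_{ii}=1$ and $p_{ij}p_{ji}=1$. For such $\mathfrak{p}$ of size $N$, $S_{\mathfrak{p}}(k^N)$ is the $k$-algebra generated by the standard basis $v_1,\dots,v_N$ with relations $v_jv_i=p_{ij}v_iv_j$, graded by $\deg v_i=1$; $\mathrm{Aut}_{\mathrm{gr}}$ is its group of degree-preserving algebra automorphisms, viewed as a subgroup of $\mathrm{GL}(N,k)$. The blocks of $\mathfrak{p}$ are the classes of the partition of $[N]$ with $i\sim j$ iff rows $i,j$ of $\mathfrak{p}$ are identical; $\mathfrak{p}_{BC}=(p_{ij})_{i\in B,j\in C}$; with $r$ the number of blocks, $\mathfrak{S}_r$ permutes the blocks and $\mathrm{Stab}(\mathfrak{p})=\{\sigma\in\mathfrak{S}_r:|\sigma(B)|=|B|\text{ and }\mathfrak{p}_{BC}=\mathfrak{p}_{\sigma(B)\sigma(C)}\text{ for all blocks }B,C\}$. For any quantum parameter matrix $\mathfrak{p}$ one has $\mathrm{Aut}_{\mathrm{gr}}(S_{\mathfrak{p}}(k^N))\cong(\prod_{B}\mathrm{GL}(V_B))\rtimes\mathrm{Stab}(\mathfrak{p})$ with $\mathrm{GL}(V_B)\cong\mathrm{GL}(|B|,k)$ and $\mathrm{Stab}(\mathfrak{p})$ permuting the factors. *)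

theory Defs
  imports Main "HOL-Combinatorics.Permutations"
begin

text \<open>An N x N matrix over k is a function q :: nat => nat => k, with indices in {0..<N}.\<close>

definition quantum_param :: "nat \<Rightarrow> (nat \<Rightarrow> nat \<Rightarrow> 'k::field) \<Rightarrow> bool" where
  "quantum_param N q \<longleftrightarrow>
     (\<forall>i<N. q i i = 1) \<and> (\<forall>i<N. \<forall>j<N. q i j * q j i = 1)"

definition block_of :: "nat \<Rightarrow> (nat \<Rightarrow> nat \<Rightarrow> 'k) \<Rightarrow> nat \<Rightarrow> nat set" where
  "block_of N q i = {j. j < N \<and> (\<forall>l<N. q j l = q i l)}"

definition blocks :: "nat \<Rightarrow> (nat \<Rightarrow> nat \<Rightarrow> 'k) \<Rightarrow> nat set set" where
  "blocks N q = {block_of N q i | i. i < N}"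

text \<open>B enumerates the blocks as B 0, ..., B (r-1) (the paper's B_1..B_r), bijectively.\<close>
definition blocks_indexed ::
  "nat \<Rightarrow> (nat \<Rightarrow> nat \<Rightarrow> 'k) \<Rightarrow> nat \<Rightarrow> (nat \<Rightarrow> nat set) \<Rightarrow> bool" where
  "blocks_indexed N q r B \<longleftrightarrow> bij_betw B {..<r} (blocks N q)"

definition submatrix :: "(nat \<Rightarrow> nat \<Rightarrow> 'k) \<Rightarrow> nat set \<Rightarrow> nat set \<Rightarrow> 'k list list" where
  "submatrix q B C =
     map (\<lambda>i. map (\<lambda>j. q i j) (sorted_list_of_set C)) (sorted_list_of_set B)"

definition Stab ::
  "(nat \<Rightarrow> nat \<Rightarrow> 'k) \<Rightarrow> nat \<Rightarrow> (nat \<Rightarrow> nat set) \<Rightarrow> (nat \<Rightarrow> nat) set" where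
  "Stab q r B = {\<sigma>. \<sigma> permutes {..<r} \<and>
      (\<forall>i<r. card (B (\<sigma> i)) = card (B i)) \<and>
      (\<forall>i<r. \<forall>j<r. submatrix q (B i) (B j) = submatrix q (B (\<sigma> i)) (B (\<sigma> j)))}"

definition perm_group :: "nat \<Rightarrow> (nat \<Rightarrow> nat) set \<Rightarrow> bool" where
  "perm_group r G \<longleftrightarrow> (\<forall>\<sigma>\<in>G. \<sigma> permutes {..<r}) \<and> id \<in> G \<and>
     (\<forall>\<sigma>\<in>G. \<forall>\<tau>\<in>G. \<sigma> \<circ> \<tau> \<in> G) \<and> (\<forall>\<sigma>\<in>G. inv \<sigma> \<in> G)"

end

theory Submission
  imports Defs
begin

text \<open>Since q_ij = q_ji^-1, indices with equal rows also have equal columns, so a quantum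
  parameter matrix with r blocks is constant on each product of blocks: it is the inflation of an
  r x r quantum parameter matrix c with pairwise distinct rows, and every such c inflates to a
  matrix with prescribed positive block sizes. Stab(q) is then the group of permutations
  preserving both c and the block sizes. Multiplying all block sizes by m > 0 does not change
  which permutations preserve them, so the same c serves for both sides.\<close>

definition reduced_quantum_param :: "nat \<Rightarrow> (nat \<Rightarrow> nat \<Rightarrow> 'k::field) \<Rightarrow> bool" where
  "reduced_quantum_param r c \<longleftrightarrow>
     quantum_param r c \<and> (\<forall>i<r. \<forall>j<r. (\<forall>l<r. c i l = c j l) \<longrightarrow> i = j)"

definition weighted_Stab ::
  "nat \<Rightarrow> (nat \<Rightarrow> nat) \<Rightarrow> (nat \<Rightarrow> nat \<Rightarrow> 'k) \<Rightarrow> (nat \<Rightarrow> nat) set" where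
  "weighted_Stab r s c = {\<sigma>. \<sigma> permutes {..<r} \<and> (\<forall>i<r. s (\<sigma> i) = s i) \<and>
      (\<forall>i<r. \<forall>j<r. c (\<sigma> i) (\<sigma> j) = c i j)}"

lemma quantum_param_inverse:
  assumes "quantum_param N q" "i < N" "j < N"
  shows "q i j = inverse (q j i)"
  using assms unfolding quantum_param_def by (metis inverse_unique mult.commute)

lemma block_of_eq_iff:
  assumes "x < N" "y < N"
  shows "block_of N q x = block_of N q y \<longleftrightarrow> (\<forall>l<N. q x l = q y l)"
  using assms unfolding block_of_def by (auto simp: set_eq_iff)

lemma quantum_param_block_constant:
  assumes q: "quantum_param N q" and "a < N" "b < N"
    and x: "x \<in> block_of N q a" and y: "y \<in> block_of N q b"
  shows "q x y = q a b"
proof -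
  have "q x y = q a y"
    using x y unfolding block_of_def by simp
  also have "\<dots> = inverse (q y a)"
    using quantum_param_inverse[OF q \<open>a < N\<close>, of y] y unfolding block_of_def by blast
  also have "\<dots> = inverse (q b a)"
    using \<open>a < N\<close> y unfolding block_of_def by simp
  also have "\<dots> = q a b"
    using quantum_param_inverse[OF q \<open>a < N\<close> \<open>b < N\<close>] by simp
  finally show ?thesis .
qed

lemma blocks_indexed_representatives:
  assumes "blocks_indexed N q r B"
  obtains rep where "\<forall>i<r. rep i < N \<and> B i = block_of N q (rep i)"
proof -
  have "\<forall>i<r. \<exists>x. x < N \<and> B i = block_of N q x"
    using assms bij_betwE unfolding blocks_indexed_def blocks_def by fastforce
  then show thesis using that by metis
qed

lemma blocks_indexed_cover:
  assumes "blocks_indexed N q r B" "y < N"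
  shows "\<exists>l<r. y \<in> B l"
proof -
  have "block_of N q y \<in> B ` {..<r}"
    using assms unfolding blocks_indexed_def bij_betw_def blocks_def by auto
  then show ?thesis
    using \<open>y < N\<close> unfolding block_of_def by auto
qed

lemma reduced_quantum_param_of_blocks:
  fixes q :: "nat \<Rightarrow> nat \<Rightarrow> 'k::field"
  assumes q: "quantum_param N q" and B: "blocks_indexed N q r B"
  obtains c where "reduced_quantum_param r c"
    and "\<forall>i<r. \<forall>j<r. \<forall>x\<in>B i. \<forall>y\<in>B j. q x y = c i j"
proof -
  obtain rep where rep: "\<forall>i<r. rep i < N \<and> B i = block_of N q (rep i)"
    using blocks_indexed_representatives[OF B] .
  define c where "c i j = q (rep i) (rep j)" for i j
  have const: "\<forall>i<r. \<forall>j<r. \<forall>x\<in>B i. \<forall>y\<in>B j. q x y = c i j"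
    using quantum_param_block_constant[OF q] rep unfolding c_def by simp
  have "quantum_param r c"
    using q rep unfolding quantum_param_def c_def by simp
  moreover have "i = j" if ij: "i < r" "j < r" and rows: "\<forall>l<r. c i l = c j l" for i j
  proof -
    have "q (rep i) y = q (rep j) y" if "y < N" for y
    proof -
      obtain l where l: "l < r" "y \<in> B l"
        using blocks_indexed_cover[OF B \<open>y < N\<close>] by blast
      have "rep i \<in> B i" "rep j \<in> B j"
        using rep ij unfolding block_of_def by auto
      then show ?thesis
        using const rows ij l by simp
    qed
    then have "B i = B j"
      using rep ij by (simp add: block_of_eq_iff)
    then show "i = j"
      using B ij unfolding blocks_indexed_def bij_betw_def inj_on_def by blast
  qed
  ultimately show thesis
    using that const unfolding reduced_quantum_param_def by blast
qed

lemma submatrix_const: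
  assumes "finite B" "finite C" "\<forall>x\<in>B. \<forall>y\<in>C. q x y = v"
  shows "submatrix q B C = replicate (card B) (replicate (card C) v)"
  using assms unfolding submatrix_def by (auto intro!: replicate_eqI)

lemma Stab_eq_weighted_Stab:
  assumes pos: "\<forall>i<r. 0 < s i" and card: "\<forall>i<r. card (B i) = s i"
    and const: "\<forall>i<r. \<forall>j<r. \<forall>x\<in>B i. \<forall>y\<in>B j. q x y = c i j"
  shows "Stab q r B = weighted_Stab r s c"
proof -
  have submatrix: "submatrix q (B i) (B j) = replicate (s i) (replicate (s j) (c i j))"
    if "i < r" "j < r" for i j
    using submatrix_const[of "B i" "B j" q "c i j"] that pos card const
    by (metis card_gt_0_iff)
  show ?thesis
    unfolding Stab_def weighted_Stab_def
  proof (intro Collect_cong conj_cong refl)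
    fix \<sigma> assume "\<sigma> permutes {..<r}"
    then have \<sigma>: "\<forall>i<r. \<sigma> i < r"
      using permutes_in_image by fastforce
    show "(\<forall>i<r. card (B (\<sigma> i)) = card (B i)) \<longleftrightarrow> (\<forall>i<r. s (\<sigma> i) = s i)"
      using card \<sigma> by auto
    assume "\<forall>i<r. s (\<sigma> i) = s i"
    then show "(\<forall>i<r. \<forall>j<r. submatrix q (B i) (B j) = submatrix q (B (\<sigma> i)) (B (\<sigma> j)))
        \<longleftrightarrow> (\<forall>i<r. \<forall>j<r. c (\<sigma> i) (\<sigma> j) = c i j)"
      using submatrix \<sigma> pos by (auto simp: replicate_eq_replicate)
  qed
qed

definition block_start :: "(nat \<Rightarrow> nat) \<Rightarrow> nat \<Rightarrow> nat" where
  "block_start s i = (\<Sum>k<i. s k)"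

definition block_interval :: "(nat \<Rightarrow> nat) \<Rightarrow> nat \<Rightarrow> nat set" where
  "block_interval s i = {block_start s i..<block_start s (Suc i)}"

definition block_index :: "(nat \<Rightarrow> nat) \<Rightarrow> nat \<Rightarrow> nat" where
  "block_index s x = (LEAST i. x < block_start s (Suc i))"

definition inflate :: "(nat \<Rightarrow> nat) \<Rightarrow> (nat \<Rightarrow> nat \<Rightarrow> 'k) \<Rightarrow> nat \<Rightarrow> nat \<Rightarrow> 'k" where
  "inflate s c x y = c (block_index s x) (block_index s y)"

lemma block_start_Suc: "block_start s (Suc i) = block_start s i + s i"
  unfolding block_start_def by simp

lemma block_start_mono: "i \<le> j \<Longrightarrow> block_start s i \<le> block_start s j"
  unfolding block_start_def by (simp add: sum_mono2)

lemma card_block_interval: "card (block_interval s i) = s i"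
  unfolding block_interval_def block_start_Suc by simp

lemma block_interval_subset: "i < r \<Longrightarrow> block_interval s i \<subseteq> {..<block_start s r}"
  using block_start_mono[of "Suc i" r s] unfolding block_interval_def by auto

lemma block_index_eq: "x \<in> block_interval s i \<Longrightarrow> block_index s x = i"
  unfolding block_index_def block_interval_def
proof (rule Least_equality)
  fix j assume "x \<in> {block_start s i..<block_start s (Suc i)}" "x < block_start s (Suc j)"
  then show "i \<le> j"
    using block_start_mono[of "Suc j" i s] by (meson atLeastLessThan_iff le_less_trans not_less not_less_eq_eq)
qed simp

lemma mem_block_interval_block_index:
  assumes "x < block_start s r"
  shows "block_index s x < r \<and> x \<in> block_interval s (block_index s x)"
proof -
  have "\<exists>i<r. x \<in> block_interval s i"
    using assms
  proof (induction r)
    case (Suc r)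
    then show ?case
      by (cases "x < block_start s r") (auto simp: block_interval_def less_Suc_eq)
  qed (simp add: block_start_def)
  then show ?thesis
    using block_index_eq by blast
qed

lemma block_index_image:
  assumes "\<forall>i<r. 0 < s i"
  shows "block_index s ` {..<block_start s r} = {..<r}"
proof
  show "block_index s ` {..<block_start s r} \<subseteq> {..<r}"
    using mem_block_interval_block_index by blast
  show "{..<r} \<subseteq> block_index s ` {..<block_start s r}"
  proof
    fix i assume "i \<in> {..<r}"
    then have "block_start s i \<in> block_interval s i" "block_interval s i \<subseteq> {..<block_start s r}"
      using assms block_interval_subset[of i r s] by (auto simp: block_interval_def block_start_Suc)
    then show "i \<in> block_index s ` {..<block_start s r}"
      using block_index_eq by (metis image_eqI subsetD)
  qed
qed

lemma quantum_param_inflate: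
  assumes "quantum_param r c"
  shows "quantum_param (block_start s r) (inflate s c)"
  using assms mem_block_interval_block_index unfolding quantum_param_def inflate_def by simp

lemma block_of_inflate:
  assumes c: "reduced_quantum_param r c" and pos: "\<forall>i<r. 0 < s i"
    and x: "x < block_start s r"
  shows "block_of (block_start s r) (inflate s c) x = block_interval s (block_index s x)"
proof -
  let ?N = "block_start s r"
  have "y \<in> block_of ?N (inflate s c) x \<longleftrightarrow> y \<in> block_interval s (block_index s x)"
    if y: "y < ?N" for y
  proof -
    have "y \<in> block_of ?N (inflate s c) x
        \<longleftrightarrow> (\<forall>l\<in>block_index s ` {..<?N}. c (block_index s y) l = c (block_index s x) l)"
      using y unfolding block_of_def inflate_def by auto
    also have "\<dots> \<longleftrightarrow> block_index s y = block_index s x"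
      using c mem_block_interval_block_index[OF x] mem_block_interval_block_index[OF y]
      unfolding block_index_image[OF pos] reduced_quantum_param_def by auto
    also have "\<dots> \<longleftrightarrow> y \<in> block_interval s (block_index s x)"
      using mem_block_interval_block_index[OF y] block_index_eq by metis
    finally show ?thesis .
  qed
  moreover have "block_interval s (block_index s x) \<subseteq> {..<?N}"
    using block_interval_subset mem_block_interval_block_index[OF x] by blast
  ultimately show ?thesis
    unfolding block_of_def by blast
qed

lemma blocks_indexed_inflate:
  assumes c: "reduced_quantum_param r c" and pos: "\<forall>i<r. 0 < s i"
  shows "blocks_indexed (block_start s r) (inflate s c) r (block_interval s)"
  unfolding blocks_indexed_def bij_betw_def
proof
  show "inj_on (block_interval s) {..<r}"
  proof (rule inj_onI)
    fix i j assume "i \<in> {..<r}" "block_interval s i = block_interval s j"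
    moreover have "block_start s i \<in> block_interval s i"
      using pos \<open>i \<in> {..<r}\<close> by (simp add: block_interval_def block_start_Suc)
    ultimately show "i = j"
      using block_index_eq by metis
  qed
  have "blocks (block_start s r) (inflate s c) = block_interval s ` block_index s ` {..<block_start s r}"
    using block_of_inflate[OF c pos] unfolding blocks_def by auto
  then show "block_interval s ` {..<r} = blocks (block_start s r) (inflate s c)"
    by (simp add: block_index_image[OF pos])
qed

lemma Stab_realizable_iff:
  fixes G :: "(nat \<Rightarrow> nat) set"
  assumes pos: "\<forall>i<r. 0 < s i" and N: "(\<Sum>i<r. s i) = N"
  shows "(\<exists>(q :: nat \<Rightarrow> nat \<Rightarrow> 'k::field) B.
            quantum_param N q \<and> blocks_indexed N q r B \<and>
            (\<forall>i<r. card (B i) = s i) \<and> Stab q r B = G)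
     \<longleftrightarrow> (\<exists>c :: nat \<Rightarrow> nat \<Rightarrow> 'k. reduced_quantum_param r c \<and> weighted_Stab r s c = G)"
proof
  assume "\<exists>(q :: nat \<Rightarrow> nat \<Rightarrow> 'k) B. quantum_param N q \<and> blocks_indexed N q r B \<and>
            (\<forall>i<r. card (B i) = s i) \<and> Stab q r B = G"
  then obtain q :: "nat \<Rightarrow> nat \<Rightarrow> 'k" and B where q: "quantum_param N q"
    and B: "blocks_indexed N q r B" "\<forall>i<r. card (B i) = s i" and G: "Stab q r B = G"
    by blast
  obtain c where c: "reduced_quantum_param r c"
    and const: "\<forall>i<r. \<forall>j<r. \<forall>x\<in>B i. \<forall>y\<in>B j. q x y = c i j"
    using reduced_quantum_param_of_blocks[OF q B(1)] .
  have "weighted_Stab r s c = G"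
    using Stab_eq_weighted_Stab[OF pos B(2) const] G by simp
  then show "\<exists>c :: nat \<Rightarrow> nat \<Rightarrow> 'k. reduced_quantum_param r c \<and> weighted_Stab r s c = G"
    using c by blast
next
  assume "\<exists>c :: nat \<Rightarrow> nat \<Rightarrow> 'k. reduced_quantum_param r c \<and> weighted_Stab r s c = G"
  then obtain c :: "nat \<Rightarrow> nat \<Rightarrow> 'k" where c: "reduced_quantum_param r c"
    and G: "weighted_Stab r s c = G"
    by blast
  have N: "N = block_start s r"
    using N unfolding block_start_def by simp
  have const: "\<forall>i<r. \<forall>j<r. \<forall>x\<in>block_interval s i. \<forall>y\<in>block_interval s j.
      inflate s c x y = c i j"
    by (simp add: inflate_def block_index_eq)
  have "Stab (inflate s c) r (block_interval s) = G"
    using Stab_eq_weighted_Stab[OF pos _ const] card_block_interval G by simp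
  moreover have "quantum_param N (inflate s c)"
    using c N quantum_param_inflate unfolding reduced_quantum_param_def by blast
  ultimately show "\<exists>(q :: nat \<Rightarrow> nat \<Rightarrow> 'k) B. quantum_param N q \<and> blocks_indexed N q r B \<and>
            (\<forall>i<r. card (B i) = s i) \<and> Stab q r B = G"
    using blocks_indexed_inflate[OF c pos] card_block_interval N by auto
qed

lemma weighted_Stab_scale:
  "0 < m \<Longrightarrow> weighted_Stab r (\<lambda>i. m * s i) c = weighted_Stab r s c"
  unfolding weighted_Stab_def by simp

theorem corollary5p5:
  fixes ns :: "nat \<Rightarrow> nat" and n m r :: nat and G :: "(nat \<Rightarrow> nat) set"
  assumes "0 < n" and "0 < m" and "0 < r"
    and "\<forall>i<r. 0 < ns i"
    and "(\<Sum>i<r. ns i) = n"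
    and "perm_group r G"
  shows "(\<exists>(q :: nat \<Rightarrow> nat \<Rightarrow> 'k::field) B.
            quantum_param n q \<and> blocks_indexed n q r B \<and>
            (\<forall>i<r. card (B i) = ns i) \<and> Stab q r B = G)
     \<longleftrightarrow> (\<exists>(q' :: nat \<Rightarrow> nat \<Rightarrow> 'k) B'.
            quantum_param (m * n) q' \<and> blocks_indexed (m * n) q' r B' \<and>
            (\<forall>i<r. card (B' i) = m * ns i) \<and> Stab q' r B' = G)"
proof -
  have pos: "\<forall>i<r. 0 < m * ns i"
    using assms(2,4) by simp
  have sum: "(\<Sum>i<r. m * ns i) = m * n"
    using assms(5) by (simp add: sum_distrib_left[symmetric])
  show ?thesis
    unfolding Stab_realizable_iff[OF assms(4,5)] Stab_realizable_iff[OF pos sum]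
    by (simp add: weighted_Stab_scale[OF assms(2)])
qed

end
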